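(* Suppose $\hat q^{[k]}\in\Delta_\delta$ for all $k\ge1$. Then for every round $t\ge2$ and all $s\in\mathcal S$, $a\in\mathcal A$, regardless of the history up to round $t-1$ (i.e. conditionally on any such history), $\Pr\big((s^t,a^t)=(s,a)\big)\ge\alpha\delta$.
   Context: $\mathcal S,\mathcal A$ finite; $P$ is a transition kernel with $P(s'|s,a)\ge\alpha>0$ for all $s,s',a$, and $s^{t+1}\sim P(\cdot|s^t,a^t)$. $\Delta$ is the set of $q\in\mathbb R_+^{\mathcal S\times\mathcal A\times\mathcal S}$ with $\sum_{s,a,s'}q(s,a,s')=1$ and $\sum_{s',a}q(s',a,s)=\sum_{a,s'}q(s,a,s')$ for all $s$; $\Delta_\delta=\{q\in\Delta:\sum_{s'}q(s,a,s')\ge\delta\ \forall s,a\}$ for $\delta\in(0,1)$; the policy induced by $q$ is $\pi^q(a|s)=\sum_{s'}q(s,a,s')/\sum_{a',s'}q(s,a',s')$. In algorithm IHMDP-VCG, time is divided into episodes $k=1,2,\dots$; in each round $t$ of episode $k$ the action is drawn as $a^t\sim\pi^{[k]}(\cdot|s^t)$ with $\pi^{[k]}=\pi^{\hat q^{[k]}}$, where $\hat q^{[k]}$ is determined by the history before episode $k$. *)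

theory Defs
  imports "HOL-Probability.Probability"
begin

text \<open>Occupancy measures q over S x A x S, written as a curried function q s a s'.\<close>

definition in_Delta :: "('s::finite \<Rightarrow> 'a::finite \<Rightarrow> 's \<Rightarrow> real) \<Rightarrow> bool" where
  "in_Delta q \<longleftrightarrow>
     (\<forall>s a s'. 0 \<le> q s a s') \<and>
     (\<Sum>s\<in>UNIV. \<Sum>a\<in>UNIV. \<Sum>s'\<in>UNIV. q s a s') = 1 \<and>
     (\<forall>s. (\<Sum>s'\<in>UNIV. \<Sum>a\<in>UNIV. q s' a s) = (\<Sum>a\<in>UNIV. \<Sum>s'\<in>UNIV. q s a s'))"

definition in_Delta_delta :: "real \<Rightarrow> ('s::finite \<Rightarrow> 'a::finite \<Rightarrow> 's \<Rightarrow> real) \<Rightarrow> bool" where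
  "in_Delta_delta \<delta> q \<longleftrightarrow> in_Delta q \<and> (\<forall>s a. (\<Sum>s'\<in>UNIV. q s a s') \<ge> \<delta>)"

definition pi_q :: "('s::finite \<Rightarrow> 'a::finite \<Rightarrow> 's \<Rightarrow> real) \<Rightarrow> 's \<Rightarrow> 'a \<Rightarrow> real" where
  "pi_q q s a = (\<Sum>s'\<in>UNIV. q s a s') / (\<Sum>a'\<in>UNIV. \<Sum>s'\<in>UNIV. q s a' s')"

text \<open>The policy as a distribution over actions (a genuine distribution whenever q is in Delta_delta).\<close>
definition policy_pmf :: "('s::finite \<Rightarrow> 'a::finite \<Rightarrow> 's \<Rightarrow> real) \<Rightarrow> 's \<Rightarrow> 'a pmf" where
  "policy_pmf q s = embed_pmf (pi_q q s)"

text \<open>Conditional law of (s^t, a^t) given the history h = [(s^1,a^1),...,(s^{t-1},a^{t-1})]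
  (so t = length h + 1).  Round t belongs to episode ep t, which starts at round start (ep t);
  the estimate qhat k is a function of the history before episode k, i.e. of the first
  start k - 1 pairs of h.\<close>
definition step_pmf ::
  "('s::finite \<Rightarrow> 'a::finite \<Rightarrow> 's pmf) \<Rightarrow> (nat \<Rightarrow> ('s \<times> 'a) list \<Rightarrow> ('s \<Rightarrow> 'a \<Rightarrow> 's \<Rightarrow> real))
    \<Rightarrow> (nat \<Rightarrow> nat) \<Rightarrow> (nat \<Rightarrow> nat) \<Rightarrow> ('s \<times> 'a) list \<Rightarrow> ('s \<times> 'a) pmf" where
  "step_pmf P qhat ep start h =
     (let k = ep (length h + 1);
          qk = qhat k (take (start k - 1) h)
      in do { s \<leftarrow> P (fst (last h)) (snd (last h));
              a \<leftarrow> policy_pmf qk s;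
              return_pmf (s, a) })"

end

theory Submission
  imports Defs
begin

text \<open>The next state is drawn from P, whose entries are all at least \<alpha>; the action is then
  drawn from the policy induced by an occupancy measure in \<Delta>_\<delta>, and since each
  state-action mass is at least \<delta> while the total mass is 1, the policy gives every action
  probability at least \<delta>. The probability of the pair is the product of the two, and the
  history enters only through an estimate that lies in \<Delta>_\<delta> whatever it is.\<close>

lemma pmf_bind_dependent_pair:
  "pmf (bind_pmf M (\<lambda>x. bind_pmf (N x) (\<lambda>y. return_pmf (x, y)))) (x, y)
     = pmf M x * pmf (N x) y"
proof -
  have "pmf (bind_pmf (N x') (\<lambda>y'. return_pmf (x', y'))) (x, y)
          = (if x' = x then pmf (N x) y else 0)" for x'
  proof (cases "x' = x")
    case True
    then show ?thesis
      using pmf_map_inj'[of "Pair x" "N x" y] by (simp add: map_pmf_def inj_on_def)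
  next
    case False
    then show ?thesis by (auto simp: pmf_eq_0_set_pmf)
  qed
  then show ?thesis
    by (simp add: pmf_bind integral_measure_pmf_real[where A = "{x}"] split: if_splits)
qed

lemma in_Delta_state_mass_le_1:
  assumes "in_Delta q"
  shows "(\<Sum>a\<in>UNIV. \<Sum>s'\<in>UNIV. q s a s') \<le> 1"
proof -
  have nonneg: "0 \<le> q s a s'" for s a s'
    using assms by (simp add: in_Delta_def)
  have "(\<Sum>a\<in>UNIV. \<Sum>s'\<in>UNIV. q s a s') \<le> (\<Sum>s\<in>UNIV. \<Sum>a\<in>UNIV. \<Sum>s'\<in>UNIV. q s a s')"
    by (rule member_le_sum[where f = "\<lambda>s. \<Sum>a\<in>UNIV. \<Sum>s'\<in>UNIV. q s a s'"])
      (auto intro!: sum_nonneg nonneg)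
  then show ?thesis
    using assms by (simp add: in_Delta_def)
qed

lemma state_action_mass_le_pi_q:
  assumes "in_Delta q"
  shows "(\<Sum>s'\<in>UNIV. q s a s') \<le> pi_q q s a"
proof -
  have nonneg: "0 \<le> q s a s'" for s a s'
    using assms by (simp add: in_Delta_def)
  define m where "m = (\<Sum>s'\<in>UNIV. q s a s')"
  define D where "D = (\<Sum>a'\<in>UNIV. \<Sum>s'\<in>UNIV. q s a' s')"
  have "m \<le> D"
    unfolding m_def D_def by (rule member_le_sum) (auto intro: sum_nonneg nonneg)
  moreover have "D \<le> 1" "0 \<le> m"
    using in_Delta_state_mass_le_1[OF assms] by (auto simp: D_def m_def intro: sum_nonneg nonneg)
  ultimately have "m \<le> m / D"
    by (cases "D = 0") (simp_all add: le_divide_eq mult_left_le)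
  then show ?thesis
    by (simp add: pi_q_def m_def D_def)
qed

lemma pmf_policy_pmf:
  assumes "in_Delta q" and pos: "(\<Sum>a\<in>UNIV. \<Sum>s'\<in>UNIV. q s a s') > 0"
  shows "pmf (policy_pmf q s) a = pi_q q s a"
proof -
  have nonneg: "0 \<le> pi_q q s a'" for a'
    using assms by (auto simp: in_Delta_def pi_q_def intro!: divide_nonneg_pos sum_nonneg)
  have "(\<Sum>a'\<in>UNIV. pi_q q s a') = 1"
    using pos by (simp add: pi_q_def sum_divide_distrib[symmetric])
  then have "(\<integral>\<^sup>+a'. pi_q q s a' \<partial>count_space UNIV) = 1"
    by (simp add: nn_integral_count_space_finite sum_ennreal nonneg)
  then show ?thesis
    unfolding policy_pmf_def using pmf_embed_pmf[of "pi_q q s", OF nonneg] by blast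
qed

lemma pmf_policy_pmf_ge_delta:
  assumes "in_Delta_delta \<delta> q" "0 < \<delta>"
  shows "pmf (policy_pmf q s) a \<ge> \<delta>"
proof -
  have q: "in_Delta q" and row: "\<And>s a. \<delta> \<le> (\<Sum>s'\<in>UNIV. q s a s')"
    using assms(1) by (auto simp: in_Delta_delta_def)
  have "(\<Sum>s'\<in>UNIV. q s a s') \<le> (\<Sum>a'\<in>UNIV. \<Sum>s'\<in>UNIV. q s a' s')"
    using q by (intro member_le_sum) (auto simp: in_Delta_def intro: sum_nonneg)
  then have "(\<Sum>a'\<in>UNIV. \<Sum>s'\<in>UNIV. q s a' s') > 0"
    using row[of s a] assms(2) by linarith
  then show ?thesis
    using pmf_policy_pmf[OF q] state_action_mass_le_pi_q[OF q, of s a] row[of s a] by simp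
qed

theorem lemma6:
  fixes P :: "'s::finite \<Rightarrow> 'a::finite \<Rightarrow> 's pmf"
    and qhat :: "nat \<Rightarrow> ('s \<times> 'a) list \<Rightarrow> ('s \<Rightarrow> 'a \<Rightarrow> 's \<Rightarrow> real)"
    and ep start :: "nat \<Rightarrow> nat"
    and \<alpha> \<delta> :: real
  assumes alpha_pos: "\<alpha> > 0"
    and P_lower: "\<forall>s a s'. pmf (P s a) s' \<ge> \<alpha>"
    and delta: "0 < \<delta>" "\<delta> < 1"
    and episodes: "\<forall>t\<ge>1. 1 \<le> start (ep t) \<and> start (ep t) \<le> t"
    and qhat_in: "\<forall>k\<ge>1. \<forall>h. in_Delta_delta \<delta> (qhat k h)"
    and ep_pos: "\<forall>t\<ge>1. ep t \<ge> 1"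
  shows "\<forall>t\<ge>2. \<forall>h. length h = t - 1 \<longrightarrow>
           (\<forall>s a. pmf (step_pmf P qhat ep start h) (s, a) \<ge> \<alpha> * \<delta>)"
proof (intro allI impI)
  fix t and h :: "('s \<times> 'a) list" and s a
  define k where "k = ep (length h + 1)"
  define qk where "qk = qhat k (take (start k - 1) h)"
  have "in_Delta_delta \<delta> qk"
    using qhat_in ep_pos by (simp add: qk_def k_def)
  then have policy: "pmf (policy_pmf qk s) a \<ge> \<delta>"
    using delta(1) by (rule pmf_policy_pmf_ge_delta)
  have "pmf (step_pmf P qhat ep start h) (s, a)
          = pmf (P (fst (last h)) (snd (last h))) s * pmf (policy_pmf qk s) a"
    unfolding step_pmf_def Let_def k_def[symmetric] qk_def[symmetric]
    by (rule pmf_bind_dependent_pair)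
  also have "\<dots> \<ge> \<alpha> * \<delta>"
    using P_lower alpha_pos delta(1) policy by (intro mult_mono) auto
  finally show "\<alpha> * \<delta> \<le> pmf (step_pmf P qhat ep start h) (s, a)" .
qed

end
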